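(* Consider any execution of Algorithm A with $m=n$ registers. Let $\tau\le\tau'$ be two times. If at time $\tau'$ all entries of $\mathit{REG}$ are equal to a single quadruplet $Y$, then there exists an entry $X$ of $\mathit{REG}$ at time $\tau$ such that $Y\sqsupseteq X$.
   Context: Quadruplets, lexicographic order: a quadruplet is $\langle rd,\mathit{lvl},\mathit{cfl},\mathit{val}\rangle$ with $rd\in\mathbb{N}$, $\mathit{lvl}\in\{\mathtt{down}<\mathtt{up}\}$, $\mathit{cfl}\in\{\mathtt{false}<\mathtt{true}\}$, $\mathit{val}$ in a totally ordered value set with a least default $\bot$; quadruplets are totally ordered lexicographically. $X \sqsupset Y$ iff $(X>Y)\wedge[(X.rd>Y.rd)\vee X.\mathit{cfl} \vee (\neg Y.\mathit{cfl}\wedge X.\mathit{val}=Y.\mathit{val})]$; $X\sqsupseteq Y$ iff $X\sqsupset Y$ or $X=Y$. For a nonempty finite set $T$ of quadruplets with lexicographic maximum $\langle r,\ell,c,v\rangle$, $\mathrm{sup}(T)=\langle r,\ell,\mathit{conflict}(T),v\rangle$ where $\mathit{conflict}(T)$ holds iff some element of $T$ of round $r$ has conflict field $\mathtt{true}$, or the elements of $T$ of round $r$ carry at least two distinct values. Model and Algorithm A: $n$ anonymous asynchronous processes (any number may crash) share an atomic snapshot object $\mathit{REG}[1..m]$ of multi-writer registers, each initially $\langle 0,\mathtt{down},\mathtt{false},\bot\rangle$, with atomic operations $\mathrm{snapshot}()$ and $\mathrm{write}(x,X)$; executions are interleavings of atomic steps, one per time instant. A process proposing $v$ repeats forever: $\mathit{view}\leftarrow\mathrm{snapshot}()$;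 then (1) if all entries equal $\langle r,\mathtt{up},\mathtt{false},w\rangle$ with $r>0$, it returns (decides) $w$; (2) else if all entries equal $\langle r,\mathtt{down},\mathtt{false},w\rangle$ with $r>0$, it writes $\langle r+1,\mathtt{up},\mathtt{false},w\rangle$ into $\mathit{REG}[1]$; (3) else if all entries equal $\langle r,\ell,\mathtt{true},w\rangle$ with $r>0$, it writes $\langle r+1,\mathtt{down},\mathtt{false},w\rangle$ into $\mathit{REG}[1]$; (4) otherwise it computes $S=\mathrm{sup}(\{\mathit{view}[1],\dots,\mathit{view}[m],\langle 1,\mathtt{down},\mathtt{false},v\rangle\})$, lets $x$ be the smallest index with $\mathit{view}[x]\neq S$, and writes $S$ into $\mathit{REG}[x]$. *)

theory Defs
  imports Main "HOL-Library.Product_Lexorder"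
begin

datatype lvl = Down | Up

instantiation lvl :: linorder
begin
definition less_eq_lvl :: "lvl \<Rightarrow> lvl \<Rightarrow> bool" where
  "less_eq_lvl a b = (a = Down \<or> b = Up)"
definition less_lvl :: "lvl \<Rightarrow> lvl \<Rightarrow> bool" where
  "less_lvl a b = (a = Down \<and> b = Up)"
instance
  by standard (auto simp: less_eq_lvl_def less_lvl_def elim: lvl.exhaust intro: lvl.exhaust)
end

text \<open>A quadruplet <rd, lvl, cfl, val>; the order on nested pairs (Product_Lexorder)
  is the lexicographic order; on bool, False < True.\<close>
type_synonym 'v quad = "nat \<times> lvl \<times> bool \<times> 'v"

definition rd :: "'v quad \<Rightarrow> nat" where "rd X = fst X"
definition lv :: "'v quad \<Rightarrow> lvl" where "lv X = fst (snd X)"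
definition cfl :: "'v quad \<Rightarrow> bool" where "cfl X = fst (snd (snd X))"
definition val :: "'v quad \<Rightarrow> 'v" where "val X = snd (snd (snd X))"

definition qsqsup :: "'v::linorder quad \<Rightarrow> 'v quad \<Rightarrow> bool" where
  "qsqsup X Y \<longleftrightarrow> X > Y \<and> (rd X > rd Y \<or> cfl X \<or> (\<not> cfl Y \<and> val X = val Y))"

definition qsqsupeq :: "'v::linorder quad \<Rightarrow> 'v quad \<Rightarrow> bool" where
  "qsqsupeq X Y \<longleftrightarrow> qsqsup X Y \<or> X = Y"

definition conflict :: "'v::linorder quad set \<Rightarrow> bool" where
  "conflict T \<longleftrightarrow>
     (let r = rd (Max T) in
       (\<exists>X\<in>T. rd X = r \<and> cfl X) \<or>
       (\<exists>X\<in>T. \<exists>Y\<in>T. rd X = r \<and> rd Y = r \<and> val X \<noteq> val Y))"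

definition qsup :: "'v::linorder quad set \<Rightarrow> 'v quad" where
  "qsup T = (rd (Max T), lv (Max T), conflict T, val (Max T))"

datatype 'v pstate = Snap | Pend nat "'v quad" | Decided

record 'v config =
  mem :: "nat \<Rightarrow> 'v quad"
  loc :: "nat \<Rightarrow> 'v pstate"

definition all_eq :: "(nat \<Rightarrow> 'v quad) \<Rightarrow> nat \<Rightarrow> 'v quad \<Rightarrow> bool" where
  "all_eq view m X \<longleftrightarrow> (\<forall>x\<in>{1..m}. view x = X)"

text \<open>Local computation after a snapshot: None = decide; Some (x, X) = write X into REG[x].\<close>
definition action :: "(nat \<Rightarrow> 'v::linorder quad) \<Rightarrow> nat \<Rightarrow> 'v \<Rightarrow> (nat \<times> 'v quad) option" where
  "action view m v =
    (if \<exists>r w. r > 0 \<and> all_eq view m (r, Up, False, w) then None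
     else if \<exists>r w. r > 0 \<and> all_eq view m (r, Down, False, w)
       then Some (1, (Suc (rd (view 1)), Up, False, val (view 1)))
     else if \<exists>r l w. r > 0 \<and> all_eq view m (r, l, True, w)
       then Some (1, (Suc (rd (view 1)), Down, False, val (view 1)))
     else (let S = qsup (insert (1, Down, False, v) (view ` {1..m}))
           in Some (LEAST x. x \<in> {1..m} \<and> view x \<noteq> S, S)))"

definition init_config :: "'v::order_bot config" where
  "init_config = \<lparr> mem = (\<lambda>x. (0, Down, False, bot)), loc = (\<lambda>p. Snap) \<rparr>"

text \<open>One atomic step of process p (p < n) with proposal v; m = n registers.\<close>
definition step :: "nat \<Rightarrow> 'v::linorder \<Rightarrow> 'v config \<Rightarrow> 'v config \<Rightarrow> nat \<Rightarrow> bool" where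
  "step n v c c' p \<longleftrightarrow>
     (case loc c p of
        Snap \<Rightarrow>
          (case action (mem c) n v of
             None \<Rightarrow> c' = c\<lparr>loc := (loc c)(p := Decided)\<rparr>
           | Some (x, X) \<Rightarrow> c' = c\<lparr>loc := (loc c)(p := Pend x X)\<rparr>)
      | Pend x X \<Rightarrow> c' = \<lparr> mem = (mem c)(x := X), loc = (loc c)(p := Snap) \<rparr>
      | Decided \<Rightarrow> False)"

text \<open>An execution: a sequence of configurations indexed by time, starting in the initial
  configuration, where each time instant is one atomic step of some process, or nothing
  happens (to allow crashes / finite executions).\<close>
definition execution :: "nat \<Rightarrow> (nat \<Rightarrow> 'v::{linorder,order_bot}) \<Rightarrow> (nat \<Rightarrow> 'v config) \<Rightarrow> bool" where
  "execution n props C \<longleftrightarrow>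
     C 0 = init_config \<and>
     (\<forall>t. C (Suc t) = C t \<or> (\<exists>p<n. step n (props p) (C t) (C (Suc t)) p))"

end

theory Submission
  imports Defs
begin

text \<open>Fix a time \<open>\<tau>\<close> and call a quadruplet dominating if it \<open>\<sqsupseteq>\<close>-dominates some entry of
  \<open>REG\<close> at time \<open>\<tau>\<close>; by transitivity of \<open>\<sqsupseteq>\<close> this property is closed upwards. Every value a
  process computes after a snapshot dominates all entries of that snapshot, so it is dominating as
  soon as one register is. The number of non-dominating registers plus the number of processes
  about to write a non-dominating value stays below \<open>n\<close> from time \<open>\<tau>\<close> on: at time \<open>\<tau>\<close> no
  register is non-dominating and the process that moved last is about to write a dominating
  value; afterwards, a write of a non-dominating value trades a pending write for at most one
  register. Hence at time \<open>\<tau>'\<close> some register, and so the common value \<open>Y\<close>, is dominating.\<close>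

lemma rd_mono: "(X::'v::linorder quad) \<le> Y \<Longrightarrow> rd X \<le> rd Y"
  unfolding rd_def by (cases X; cases Y) (auto simp: less_eq_prod_def)

lemma qsqsup_trans: "qsqsup X Y \<Longrightarrow> qsqsup Y Z \<Longrightarrow> qsqsup X Z"
proof -
  assume XY: "qsqsup X Y" and YZ: "qsqsup Y Z"
  then have "Y < X" "Z < Y" unfolding qsqsup_def by auto
  then have "Z < X" "rd Y \<le> rd X" "rd Z \<le> rd Y" by (auto intro: rd_mono less_imp_le)
  with XY YZ show ?thesis unfolding qsqsup_def by auto
qed

lemma qsqsupeq_trans: "qsqsupeq X Y \<Longrightarrow> qsqsupeq Y Z \<Longrightarrow> qsqsupeq X Z"
  unfolding qsqsupeq_def using qsqsup_trans by blast

lemma qsqsupeq_if_rd_less: "rd (X::'v::linorder quad) < rd Z \<Longrightarrow> qsqsupeq Z X"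
  unfolding qsqsupeq_def qsqsup_def rd_def
  by (cases X; cases Z) (auto simp: less_prod_def)

lemma qsqsupeq_qsup:
  fixes T :: "'v::linorder quad set"
  assumes "finite T" "X \<in> T"
  shows "qsqsupeq (qsup T) X"
proof -
  obtain r l c w where M: "Max T = (r, l, c, w)" by (cases "Max T") auto
  obtain r' l' c' w' where X: "X = (r', l', c', w')" by (cases X) auto
  have "Max T \<in> T" "X \<le> Max T" using assms by (auto intro: Max_in)
  have "conflict T" if c
    using \<open>Max T \<in> T\<close> that unfolding conflict_def Let_def
    by (intro disjI1 bexI[of _ "Max T"]) (simp_all add: M rd_def cfl_def)
  moreover have "\<not> c' \<and> w' = w" if "\<not> conflict T" "r' = r"
    using that \<open>Max T \<in> T\<close> assms(2) unfolding conflict_def Let_def M X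
    by (auto simp: rd_def cfl_def val_def)
  ultimately show ?thesis using \<open>X \<le> Max T\<close>
    unfolding qsup_def qsqsupeq_def qsqsup_def M X
    by (auto simp: rd_def lv_def cfl_def val_def less_prod_def less_eq_prod_def)
qed

lemma action_dominates_view:
  assumes "action view n v = Some (x, Z)" and "y \<in> {1..n}"
  shows "qsqsupeq Z (view y)"
proof -
  consider (new_round) "rd (view 1) < rd Z" "\<exists>W. all_eq view n W"
    | (sup) "Z = qsup (insert (1, Down, False, v) (view ` {1..n}))"
    using assms(1) unfolding action_def by (simp add: Let_def rd_def split: if_splits; fastforce)
  then show ?thesis
  proof cases
    case new_round
    then have "view y = view 1" using assms(2) by (auto simp: all_eq_def)
    with new_round show ?thesis by (simp add: qsqsupeq_if_rd_less)
  next
    case sup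
    with assms(2) show ?thesis by (simp add: qsqsupeq_qsup)
  qed
qed

lemma stepE:
  assumes "step n v c c' p"
  obtains (decide) "mem c' = mem c" "loc c' = (loc c)(p := Decided)"
  | (snapshot) x X where "action (mem c) n v = Some (x, X)"
      "mem c' = mem c" "loc c' = (loc c)(p := Pend x X)"
  | (store) x X where "loc c p = Pend x X"
      "mem c' = (mem c)(x := X)" "loc c' = (loc c)(p := Snap)"
  using assms unfolding step_def by (auto split: pstate.splits option.splits)

lemma execution_SucE:
  assumes "execution n props C"
  obtains (idle) "C (Suc t) = C t"
  | (move) p where "p < n" "step n (props p) (C t) (C (Suc t)) p"
  using assms unfolding execution_def by blast

text \<open>The witness is the process that took the latest step.\<close>
lemma execution_ex_pending_dominates:
  assumes "n \<ge> 1" and "execution n props C"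
  shows "\<exists>p<n. \<forall>x Z. loc (C t) p = Pend x Z \<longrightarrow> (\<forall>y\<in>{1..n}. qsqsupeq Z (mem (C t) y))"
proof (induction t)
  case 0
  have "C 0 = init_config" using assms(2) unfolding execution_def by simp
  with assms(1) show ?case by (intro exI[of _ 0]) (simp add: init_config_def)
next
  case (Suc t)
  from assms(2) show ?case
  proof (cases rule: execution_SucE[where t = t])
    case idle
    with Suc.IH show ?thesis by simp
  next
    case (move p)
    from move(2) show ?thesis
    proof (cases rule: stepE)
      case (snapshot x X)
      with move(1) show ?thesis
        by (intro exI[of _ p]) (simp add: action_dominates_view del: split_paired_All)
    qed (use move(1) in \<open>(intro exI[of _ p]; simp)+\<close>)
  qed
qed

definition dominating :: "nat \<Rightarrow> (nat \<Rightarrow> 'v::linorder quad) \<Rightarrow> 'v quad \<Rightarrow> bool" where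
  "dominating n R Z \<longleftrightarrow> (\<exists>x\<in>{1..n}. qsqsupeq Z (R x))"

definition undominated_regs ::
  "nat \<Rightarrow> (nat \<Rightarrow> 'v::linorder quad) \<Rightarrow> (nat \<Rightarrow> 'v quad) \<Rightarrow> nat set" where
  "undominated_regs n R M = {x\<in>{1..n}. \<not> dominating n R (M x)}"

definition undominated_writers ::
  "nat \<Rightarrow> (nat \<Rightarrow> 'v::linorder quad) \<Rightarrow> (nat \<Rightarrow> 'v pstate) \<Rightarrow> nat set" where
  "undominated_writers n R L = {p. p < n \<and> (\<exists>x Z. L p = Pend x Z \<and> \<not> dominating n R Z)}"

definition undominated_count :: "nat \<Rightarrow> (nat \<Rightarrow> 'v::linorder quad) \<Rightarrow> 'v config \<Rightarrow> nat" where
  "undominated_count n R c =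
     card (undominated_regs n R (mem c)) + card (undominated_writers n R (loc c))"

lemma dominating_mono: "dominating n R Y \<Longrightarrow> qsqsupeq Z Y \<Longrightarrow> dominating n R Z"
  unfolding dominating_def using qsqsupeq_trans by blast

lemma ex_dominating_if_card_undominated_regs_less:
  assumes "card (undominated_regs n R M) < n"
  shows "\<exists>y\<in>{1..n}. dominating n R (M y)"
proof (rule ccontr)
  assume "\<not> ?thesis"
  then have "undominated_regs n R M = {1..n}" unfolding undominated_regs_def by auto
  with assms show False by simp
qed

lemma undominated_count_step:
  assumes "step n v c c' p" and "p < n" and "undominated_count n R c < n"
  shows "undominated_count n R c' \<le> undominated_count n R c"
proof -
  let ?B = "undominated_regs n R (mem c)" and ?S = "undominated_writers n R (loc c)"
  let ?B' = "undominated_regs n R (mem c')" and ?S' = "undominated_writers n R (loc c')"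
  have fin: "finite ?B" "finite ?S'" "finite ?S"
    unfolding undominated_regs_def undominated_writers_def by auto
  from assms(1) show ?thesis
  proof (cases rule: stepE)
    case decide
    then have "?S' \<subseteq> ?S" unfolding undominated_writers_def by auto
    with decide fin show ?thesis unfolding undominated_count_def by (simp add: card_mono)
  next
    case (snapshot x X)
    have "card ?B < n" using assms(3) unfolding undominated_count_def by simp
    then obtain y where "y \<in> {1..n}" "dominating n R (mem c y)"
      using ex_dominating_if_card_undominated_regs_less by blast
    with snapshot(1) have "dominating n R X" by (blast intro: dominating_mono action_dominates_view)
    with snapshot(3) have "?S' \<subseteq> ?S" unfolding undominated_writers_def by auto
    with snapshot fin show ?thesis unfolding undominated_count_def by (simp add: card_mono)
  next
    case (store x X)
    have "?S' \<subseteq> ?S - {p}" using store(3) unfolding undominated_writers_def by auto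
    then have S': "card ?S' \<le> card (?S - {p})" using fin by (simp add: card_mono)
    show ?thesis
    proof (cases "dominating n R X")
      case True
      with store(2) have "?B' \<subseteq> ?B" unfolding undominated_regs_def by auto
      then have "card ?B' \<le> card ?B" using fin by (simp add: card_mono)
      moreover have "card ?S' \<le> card ?S" using S' fin by (meson card_Diff1_le le_trans)
      ultimately show ?thesis unfolding undominated_count_def by simp
    next
      case False
      with store(1) assms(2) have "p \<in> ?S" unfolding undominated_writers_def by blast
      with fin have "card ?S > 0" by (auto simp: card_gt_0_iff)
      with S' fin \<open>p \<in> ?S\<close> have "card ?S' < card ?S" by simp
      moreover from store(2) have "?B' \<subseteq> insert x ?B" unfolding undominated_regs_def by auto
      then have "card ?B' \<le> Suc (card ?B)"
        using fin card_mono[of "insert x ?B" ?B'] by (simp add: card_insert_if split: if_splits)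
      ultimately show ?thesis unfolding undominated_count_def by linarith
    qed
  qed
qed

lemma undominated_count_initial:
  assumes "n \<ge> 1" and "execution n props C"
  shows "undominated_count n (mem (C \<tau>)) (C \<tau>) < n"
proof -
  let ?R = "mem (C \<tau>)"
  obtain p where "p < n"
    and p: "\<forall>x Z. loc (C \<tau>) p = Pend x Z \<longrightarrow> (\<forall>y\<in>{1..n}. qsqsupeq Z (?R y))"
    using execution_ex_pending_dominates[OF assms] by blast
  have "undominated_regs n ?R ?R = {}"
    unfolding undominated_regs_def dominating_def qsqsupeq_def by auto
  moreover have "undominated_writers n ?R (loc (C \<tau>)) \<subseteq> {..<n} - {p}"
    unfolding undominated_writers_def dominating_def using p assms(1) by fastforce
  then have "card (undominated_writers n ?R (loc (C \<tau>))) < n"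
    using \<open>p < n\<close> card_mono[of "{..<n} - {p}" "undominated_writers n ?R (loc (C \<tau>))"]
    by simp
  ultimately show ?thesis unfolding undominated_count_def by simp
qed

lemma undominated_count_less:
  assumes "n \<ge> 1" and "execution n props C" and "\<tau> \<le> t"
  shows "undominated_count n (mem (C \<tau>)) (C t) < n"
  using assms(3)
proof (induction t rule: dec_induct)
  case base
  from assms(1,2) show ?case by (rule undominated_count_initial)
next
  case (step t)
  from assms(2) show ?case
  proof (cases rule: execution_SucE[where t = t])
    case idle
    with step.IH show ?thesis by simp
  next
    case (move p)
    from undominated_count_step[OF move(2,1) step.IH] step.IH show ?thesis by simp
  qed
qed

theorem lemma6:
  fixes n :: nat and props :: "nat \<Rightarrow> 'v::{linorder,order_bot}"
    and C :: "nat \<Rightarrow> 'v config" and \<tau> \<tau>' :: nat and Y :: "'v quad"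
  assumes "n \<ge> 1"
    and "\<forall>p<n. props p \<noteq> bot"
    and "execution n props C"
    and "\<tau> \<le> \<tau>'"
    and "\<forall>x\<in>{1..n}. mem (C \<tau>') x = Y"
  shows "\<exists>x\<in>{1..n}. qsqsupeq Y (mem (C \<tau>) x)"
proof -
  have "card (undominated_regs n (mem (C \<tau>)) (mem (C \<tau>'))) < n"
    using undominated_count_less[OF assms(1,3,4)] unfolding undominated_count_def by simp
  then obtain y where "y \<in> {1..n}" "dominating n (mem (C \<tau>)) (mem (C \<tau>') y)"
    using ex_dominating_if_card_undominated_regs_less by blast
  with assms(5) show ?thesis unfolding dominating_def by auto
qed

end
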